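(* Let $n$ be a positive integer and let $F_n=K_1\vee P_n$ be the fan of order $n+1$. Then $\gamma_{sR}(F_n)=2$ if $n\in\{2,4\}$, and $\gamma_{sR}(F_n)=1$ if $n\notin\{2,4\}$.
   Context: $P_n$ denotes the path on $n$ vertices and $K_1$ the one-vertex graph. The join $G_1\vee G_2$ of two graphs has vertex set $V(G_1)\cup V(G_2)$ (disjoint union) and edge set $E(G_1)\cup E(G_2)\cup\{uv: u\in V(G_1), v\in V(G_2)\}$. For a graph $G=(V,E)$ and $x\in V$, $N_G[x]=\{x\}\cup\{y: xy\in E\}$. A signed Roman dominating function (SRDF) on $G$ is a function $f:V\to\{-1,1,2\}$ such that (a) $\sum_{y\in N_G[x]}f(y)\geq 1$ for every $x\in V$, and (b) every vertex $x$ with $f(x)=-1$ is adjacent to at least one vertex $y$ with $f(y)=2$. The weight of $f$ is $\sum_{x\in V}f(x)$, and $\gamma_{sR}(G)$ is the minimum weight of an SRDF on $G$. *)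

theory Defs
  imports Main
begin

definition closed_nbhd :: "'a set \<Rightarrow> ('a \<Rightarrow> 'a \<Rightarrow> bool) \<Rightarrow> 'a \<Rightarrow> 'a set" where
  "closed_nbhd V E x = insert x {y \<in> V. E x y}"

definition is_SRDF :: "'a set \<Rightarrow> ('a \<Rightarrow> 'a \<Rightarrow> bool) \<Rightarrow> ('a \<Rightarrow> int) \<Rightarrow> bool" where
  "is_SRDF V E f \<longleftrightarrow>
     (\<forall>x\<in>V. f x \<in> {-1, 1, 2}) \<and>
     (\<forall>x. x \<notin> V \<longrightarrow> f x = 0) \<and>
     (\<forall>x\<in>V. (\<Sum>y\<in>closed_nbhd V E x. f y) \<ge> 1) \<and>
     (\<forall>x\<in>V. f x = -1 \<longrightarrow> (\<exists>y\<in>V. E x y \<and> f y = 2))"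

definition weight :: "'a set \<Rightarrow> ('a \<Rightarrow> int) \<Rightarrow> int" where
  "weight V f = (\<Sum>x\<in>V. f x)"

definition gamma_sR :: "'a set \<Rightarrow> ('a \<Rightarrow> 'a \<Rightarrow> bool) \<Rightarrow> int" where
  "gamma_sR V E = Min {weight V f | f. is_SRDF V E f}"

text \<open>The fan F_n = K_1 join P_n: vertex 0 is the K_1 vertex, vertices 1..n form the path
1 - 2 - ... - n; vertex 0 is adjacent to all path vertices.\<close>
definition fan_V :: "nat \<Rightarrow> nat set" where
  "fan_V n = {0..n}"

definition fan_E :: "nat \<Rightarrow> nat \<Rightarrow> nat \<Rightarrow> bool" where
  "fan_E n u v \<longleftrightarrow> u \<in> fan_V n \<and> v \<in> fan_V n \<and> u \<noteq> v \<and>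
     (u = 0 \<or> v = 0 \<or> u = v + 1 \<or> v = u + 1)"

end

theory Submission
  imports Defs
begin

text \<open>The hub is a universal vertex, so its closed-neighbourhood condition already forces
  weight at least 1. The alternating labelling 2; -1, 1, -1, ... of hub and path attains
  weight 1 for odd n; for even n at least 6 the labels at positions 4, 5, 6 are changed to
  -1, 2, -1 to lower the sum by one. For n = 2 and n = 4 a short case analysis rules out
  weight 1, and explicit labellings of weight 2 exist.\<close>

lemma gamma_sR_eqI:
  assumes "finite V" and "is_SRDF V E f" and "weight V f = a"
    and "\<And>g. is_SRDF V E g \<Longrightarrow> a \<le> weight V g"
  shows "gamma_sR V E = a"
proof -
  let ?W = "{weight V g | g. is_SRDF V E g}"
  have "?W \<subseteq> {- int (card V) .. 2 * int (card V)}"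
  proof
    fix w assume "w \<in> ?W"
    then obtain g where g: "is_SRDF V E g" "w = weight V g" by auto
    then have range: "\<forall>x\<in>V. g x \<in> {-1, 1, 2}" unfolding is_SRDF_def by auto
    have "(\<Sum>x\<in>V. - 1) \<le> (\<Sum>x\<in>V. g x)" "(\<Sum>x\<in>V. g x) \<le> (\<Sum>x\<in>V. 2::int)"
      using range by (intro sum_mono; auto)+
    then show "w \<in> {- int (card V) .. 2 * int (card V)}"
      using g(2) unfolding weight_def by (simp add: mult.commute)
  qed
  then have "finite ?W" by (rule finite_subset) simp
  then show ?thesis
    unfolding gamma_sR_def using assms(2-4) by (intro Min_eqI) auto
qed

lemma weight_ge_1_if_universal_vertex:
  assumes "is_SRDF V E f" and "x \<in> V" and "closed_nbhd V E x = V"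
  shows "weight V f \<ge> 1"
  using assms unfolding is_SRDF_def weight_def by metis

lemma closed_nbhd_fan_hub: "closed_nbhd (fan_V n) (fan_E n) 0 = fan_V n"
  unfolding closed_nbhd_def fan_E_def fan_V_def by auto

definition fan_nbhd_sum :: "nat \<Rightarrow> (nat \<Rightarrow> int) \<Rightarrow> nat \<Rightarrow> int" where
  "fan_nbhd_sum n f i =
    f 0 + f i + (if 2 \<le> i then f (i - 1) else 0) + (if i < n then f (i + 1) else 0)"

lemma sum_closed_nbhd_fan_path:
  assumes "i \<in> {1..n}"
  shows "(\<Sum>y\<in>closed_nbhd (fan_V n) (fan_E n) i. f y) = fan_nbhd_sum n f i"
proof -
  have "closed_nbhd (fan_V n) (fan_E n) i =
      {0, i} \<union> (if 2 \<le> i then {i - 1} else {}) \<union> (if i < n then {i + 1} else {})"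
    using assms unfolding closed_nbhd_def fan_E_def fan_V_def by (auto split: if_splits)
  then show ?thesis using assms by (auto simp: fan_nbhd_sum_def)
qed

lemma weight_fan: "weight (fan_V n) f = f 0 + (\<Sum>i=1..n. f i)"
proof -
  have "fan_V n = insert 0 {1..n}" unfolding fan_V_def by auto
  then show ?thesis unfolding weight_def by simp
qed

lemma is_SRDF_fan_hub_2I:
  assumes hub: "f 0 = 2"
    and range: "\<forall>i\<in>{1..n}. f i \<in> {-1, 1, 2}"
    and outside: "\<forall>i>n. f i = 0"
    and weight: "(\<Sum>i=1..n. f i) \<ge> -1"
    and local_sum: "\<forall>i\<in>{1..n}. fan_nbhd_sum n f i \<ge> 1"
  shows "is_SRDF (fan_V n) (fan_E n) f"
  unfolding is_SRDF_def
proof (intro conjI ballI allI impI)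
  fix x assume "x \<in> fan_V n"
  then show "f x \<in> {-1, 1, 2}" using hub range unfolding fan_V_def by (cases "x = 0") auto
next
  fix x assume "x \<notin> fan_V n"
  then show "f x = 0" using outside unfolding fan_V_def by auto
next
  fix x assume x: "x \<in> fan_V n"
  show "(\<Sum>y\<in>closed_nbhd (fan_V n) (fan_E n) x. f y) \<ge> 1"
  proof (cases "x = 0")
    case True
    then show ?thesis using hub weight weight_fan[of n f] by (simp add: closed_nbhd_fan_hub weight_def)
  next
    case False
    then have "x \<in> {1..n}" using x unfolding fan_V_def by auto
    then show ?thesis using local_sum by (simp add: sum_closed_nbhd_fan_path)
  qed
next
  fix x assume "x \<in> fan_V n" "f x = -1"
  then have "x \<noteq> 0" using hub by (cases "x = 0") simp_all
  then show "\<exists>y\<in>fan_V n. fan_E n x y \<and> f y = 2"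
    using \<open>x \<in> fan_V n\<close> hub unfolding fan_E_def fan_V_def by (intro bexI[of _ 0]) auto
qed

lemma is_SRDF_fan_hubD:
  assumes "is_SRDF (fan_V n) (fan_E n) f"
  shows "f 0 \<in> {-1, 1, 2}" and "f 0 = -1 \<Longrightarrow> \<exists>j\<in>{1..n}. f j = 2"
proof -
  have "0 \<in> fan_V n" unfolding fan_V_def by simp
  with assms show "f 0 \<in> {-1, 1, 2}" unfolding is_SRDF_def by blast
  assume "f 0 = -1"
  with assms \<open>0 \<in> fan_V n\<close> obtain j where "j \<in> fan_V n" "fan_E n 0 j" "f j = 2"
    unfolding is_SRDF_def by blast
  then show "\<exists>j\<in>{1..n}. f j = 2" unfolding fan_V_def fan_E_def by auto
qed

lemma is_SRDF_fan_pathD: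
  assumes "is_SRDF (fan_V n) (fan_E n) f" and "i \<in> {1..n}"
  shows "f i \<in> {-1, 1, 2}" and "fan_nbhd_sum n f i \<ge> 1"
    and "f i = -1 \<Longrightarrow> f 0 = 2 \<or> (2 \<le> i \<and> f (i - 1) = 2) \<or> (i < n \<and> f (i + 1) = 2)"
proof -
  have i: "i \<in> fan_V n" using assms(2) unfolding fan_V_def by auto
  note SRDF = assms(1)[unfolded is_SRDF_def]
  show "f i \<in> {-1, 1, 2}" using SRDF i by auto
  show "fan_nbhd_sum n f i \<ge> 1"
    using SRDF i sum_closed_nbhd_fan_path[OF assms(2), of f] by auto
  assume "f i = -1"
  then obtain y where "y \<in> fan_V n" "fan_E n i y" "f y = 2" using SRDF i by blast
  then show "f 0 = 2 \<or> (2 \<le> i \<and> f (i - 1) = 2) \<or> (i < n \<and> f (i + 1) = 2)"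
    using assms(2) unfolding fan_E_def fan_V_def by (cases "y = 0") auto
qed

lemma weight_SRDF_fan_ge_1:
  assumes "is_SRDF (fan_V n) (fan_E n) f"
  shows "weight (fan_V n) f \<ge> 1"
  using weight_ge_1_if_universal_vertex[OF assms _ closed_nbhd_fan_hub]
  unfolding fan_V_def by simp

lemma weight_SRDF_fan_2_ge_2:
  assumes "is_SRDF (fan_V 2) (fan_E 2) g"
  shows "weight (fan_V 2) g \<ge> 2"
proof -
  note P = is_SRDF_fan_pathD[OF assms]
  have path: "{1..2::nat} = {1, 2}" by auto
  have range: "g 0 \<in> {-1, 1, 2}" "g 1 \<in> {-1, 1, 2}" "g 2 \<in> {-1, 1, 2}"
    using is_SRDF_fan_hubD(1)[OF assms] P(1)[of 1] P(1)[of 2] by auto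
  have roman: "g 0 = -1 \<Longrightarrow> g 1 = 2 \<or> g 2 = 2"
      "g 1 = -1 \<Longrightarrow> g 0 = 2 \<or> g 2 = 2" "g 2 = -1 \<Longrightarrow> g 0 = 2 \<or> g 1 = 2"
    using is_SRDF_fan_hubD(2)[OF assms, unfolded path] P(3)[of 1] P(3)[of 2]
    by (auto simp: eval_nat_numeral)
  have "weight (fan_V 2) g = g 0 + g 1 + g 2" unfolding weight_fan path by simp
  then show ?thesis using range roman weight_SRDF_fan_ge_1[OF assms] by auto
qed

lemma weight_SRDF_fan_4_ge_2:
  assumes "is_SRDF (fan_V 4) (fan_E 4) g"
  shows "weight (fan_V 4) g \<ge> 2"
proof (rule ccontr)
  have "{1..4::nat} = {1, 2, 3, 4}" by auto
  then have "weight (fan_V 4) g = g 0 + g 1 + g 2 + g 3 + g 4" by (simp add: weight_fan)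
  moreover assume "\<not> ?thesis"
  ultimately have total: "g 0 + g 1 + g 2 + g 3 + g 4 = 1"
    using weight_SRDF_fan_ge_1[OF assms] by simp
  note D = is_SRDF_fan_pathD[OF assms]
  have range: "g 0 \<in> {-1, 1, 2}" "g 1 \<in> {-1, 1, 2}" "g 2 \<in> {-1, 1, 2}"
      "g 3 \<in> {-1, 1, 2}" "g 4 \<in> {-1, 1, 2}"
    using is_SRDF_fan_hubD(1)[OF assms] D(1)[of 1] D(1)[of 2] D(1)[of 3] D(1)[of 4] by auto
  have local_sum: "g 0 + g 1 + g 2 \<ge> 1" "g 0 + g 1 + g 2 + g 3 \<ge> 1"
      "g 0 + g 2 + g 3 + g 4 \<ge> 1" "g 0 + g 3 + g 4 \<ge> 1"
    using D(2)[of 1] D(2)[of 2] D(2)[of 3] D(2)[of 4]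
    by (simp_all add: fan_nbhd_sum_def algebra_simps eval_nat_numeral)
  \<comment> \<open>The local sums at 2 and 3 leave weight at most 0 for the end vertices 4 and 1.\<close>
  have ends: "g 1 = -1" "g 4 = -1" using range total local_sum(2,3) by auto
  have "g 0 = 2 \<or> g 2 = 2" "g 0 = 2 \<or> g 3 = 2"
    using D(3)[of 1] D(3)[of 4] ends by (simp_all add: eval_nat_numeral)
  then show False using range total local_sum(1,4) ends by auto
qed

lemma sum_alternating_sign: "(\<Sum>i=1..n. (-1::int) ^ i) = (if even n then 0 else -1)"
  by (induction n) (auto simp: sum.cl_ivl_Suc)

lemma alternating_local_sum_ge_1:
  assumes "1 \<le> i"
  shows "2 + (-1::int) ^ i + (if 2 \<le> i then (-1) ^ (i - 1) else 0)
    + (if i < n then (-1) ^ (i + 1) else 0) \<ge> 1"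
proof -
  have "(-1::int) ^ i = - ((-1) ^ (i - 1))" using assms by (cases i) auto
  then show ?thesis by (cases "even i"; cases "2 \<le> i"; cases "i < n") auto
qed

lemma SRDF_fan_2_weight_2: "\<exists>f. is_SRDF (fan_V 2) (fan_E 2) f \<and> weight (fan_V 2) f = 2"
proof -
  define f :: "nat \<Rightarrow> int" where 
    "f i = (if i = 0 then 2 else if i = 1 then 1 else if i = 2 then -1 else 0)" for i
  have path: "{1..2::nat} = {1, 2}" by auto
  have "is_SRDF (fan_V 2) (fan_E 2) f"
    by (rule is_SRDF_fan_hub_2I) (unfold path, auto simp: fan_nbhd_sum_def f_def)
  moreover have "weight (fan_V 2) f = 2" unfolding weight_fan path by (simp add: f_def)
  ultimately show ?thesis by blast
qed

lemma SRDF_fan_4_weight_2: "\<exists>f. is_SRDF (fan_V 4) (fan_E 4) f \<and> weight (fan_V 4) f = 2"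
proof -
  define f :: "nat \<Rightarrow> int" where 
    "f i = (if i = 0 then 2 else if i = 1 \<or> i = 4 then -1 else if i \<le> 3 then 1 else 0)" for i
  have path: "{1..4::nat} = {1, 2, 3, 4}" by auto
  have "is_SRDF (fan_V 4) (fan_E 4) f"
    by (rule is_SRDF_fan_hub_2I) (unfold path, auto simp: fan_nbhd_sum_def f_def)
  moreover have "weight (fan_V 4) f = 2" unfolding weight_fan path by (simp add: f_def)
  ultimately show ?thesis by blast
qed

lemma SRDF_fan_odd_weight_1:
  assumes "odd n"
  shows "\<exists>f. is_SRDF (fan_V n) (fan_E n) f \<and> weight (fan_V n) f = 1"
proof -
  define f :: "nat \<Rightarrow> int" where 
    "f i = (if i = 0 then 2 else if i \<le> n then (-1) ^ i else 0)" for i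
  have path_sum: "(\<Sum>i=1..n. f i) = -1"
    using assms sum_alternating_sign[of n] by (simp add: f_def)
  have "is_SRDF (fan_V n) (fan_E n) f"
  proof (rule is_SRDF_fan_hub_2I)
    show "\<forall>i\<in>{1..n}. fan_nbhd_sum n f i \<ge> 1"
    proof
      fix i assume i: "i \<in> {1..n}"
      then have "fan_nbhd_sum n f i
        = 2 + (-1) ^ i + (if 2 \<le> i then (-1) ^ (i - 1) else 0) + (if i < n then (-1) ^ (i + 1) else 0)"
        by (auto simp: fan_nbhd_sum_def f_def)
      then show "fan_nbhd_sum n f i \<ge> 1"
        using alternating_local_sum_ge_1[of i n] i by simp
    qed
  qed (use path_sum in \<open>auto simp: f_def minus_one_power_iff\<close>)
  moreover have "weight (fan_V n) f = 1" using path_sum by (simp add: weight_fan f_def)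
  ultimately show ?thesis by blast
qed

lemma SRDF_fan_even_weight_1:
  assumes "even n" and "n \<ge> 6"
  shows "\<exists>f. is_SRDF (fan_V n) (fan_E n) f \<and> weight (fan_V n) f = 1"
proof -
  define h :: "nat \<Rightarrow> int" where
    "h i = (if i = 4 \<or> i = 6 then -1 else if i = 5 then 2 else (-1) ^ i)" for i
  define f :: "nat \<Rightarrow> int" where 
    "f i = (if i = 0 then 2 else if i \<le> n then h i else 0)" for i
  define d :: "nat \<Rightarrow> int" where "d i = h i - (-1) ^ i" for i
  have path_sum: "(\<Sum>i=1..n. f i) = -1"
  proof -
    have "(\<Sum>i=1..n. f i) = (\<Sum>i=1..n. (-1) ^ i + d i)"
      by (rule sum.cong) (auto simp: f_def d_def)
    also have "\<dots> = (\<Sum>i=1..n. (-1) ^ i) + (\<Sum>i=1..n. d i)" by (rule sum.distrib)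
    also have "(\<Sum>i=1..n. d i) = (\<Sum>i\<in>{4, 5, 6}. d i)"
      by (rule sum.mono_neutral_right) (use assms in \<open>auto simp: d_def h_def\<close>)
    also have "\<dots> = -1" by (simp add: d_def h_def)
    finally show ?thesis using assms sum_alternating_sign[of n] by simp
  qed
  have range: "h i \<in> {-1, 1, 2}" for i by (auto simp: h_def minus_one_power_iff)
  have "is_SRDF (fan_V n) (fan_E n) f"
  proof (rule is_SRDF_fan_hub_2I)
    show "\<forall>i\<in>{1..n}. fan_nbhd_sum n f i \<ge> 1"
    proof
      fix i assume i: "i \<in> {1..n}"
      show "fan_nbhd_sum n f i \<ge> 1"
      proof (cases "i \<in> {3, 4, 5, 6, 7}")
        case True
        then consider "i = 3" | "i = 4" | "i = 5" | "i = 6" | "i = 7" by blast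
        moreover have "n \<noteq> 7" using assms(1) by presburger
        ultimately show ?thesis using assms i by cases (simp_all add: fan_nbhd_sum_def f_def h_def)
      next
        case False
        then have "fan_nbhd_sum n f i
          = 2 + (-1) ^ i + (if 2 \<le> i then (-1) ^ (i - 1) else 0) + (if i < n then (-1) ^ (i + 1) else 0)"
          using i by (auto simp: fan_nbhd_sum_def f_def h_def)
        then show ?thesis using alternating_local_sum_ge_1[of i n] i by simp
      qed
    qed
  qed (use path_sum range in \<open>auto simp: f_def\<close>)
  moreover have "weight (fan_V n) f = 1" using path_sum by (simp add: weight_fan f_def)
  ultimately show ?thesis by blast
qed

theorem mainTheorem13:
  fixes n :: nat
  assumes "n \<ge> 1"
  shows "gamma_sR (fan_V n) (fan_E n) = (if n \<in> {2, 4} then 2 else 1)"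
proof -
  have fin: "finite (fan_V n)" unfolding fan_V_def by simp
  have "n = 2 \<or> n = 4 \<or> n \<notin> {2, 4} \<and> (odd n \<or> even n \<and> n \<ge> 6)" using assms by auto
  then consider "n = 2" | "n = 4" | "n \<notin> {2, 4}" "odd n \<or> even n \<and> n \<ge> 6" by blast
  then show ?thesis
  proof cases
    case 1
    with SRDF_fan_2_weight_2 obtain f where "is_SRDF (fan_V n) (fan_E n) f" "weight (fan_V n) f = 2"
      by blast
    with 1 fin show ?thesis by (simp add: gamma_sR_eqI weight_SRDF_fan_2_ge_2)
  next
    case 2
    with SRDF_fan_4_weight_2 obtain f where "is_SRDF (fan_V n) (fan_E n) f" "weight (fan_V n) f = 2"
      by blast
    with 2 fin show ?thesis by (simp add: gamma_sR_eqI weight_SRDF_fan_4_ge_2)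
  next
    case 3
    then obtain f where "is_SRDF (fan_V n) (fan_E n) f" "weight (fan_V n) f = 1"
      using SRDF_fan_odd_weight_1 SRDF_fan_even_weight_1 by blast
    with 3 fin show ?thesis by (simp add: gamma_sR_eqI weight_SRDF_fan_ge_1)
  qed
qed

end
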